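(* Fix $n\ge 2$, a dictator agent $t\in\{1,\dots,n\}$, and parameters $k\in[2,+\infty)$ and $a\in(0,1)$. Let $f$ be the mechanism that, on a profile $\mathbf{x}=(x_1,\dots,x_n)$ with $x_l=\min\mathbf{x}$, $x_r=\max\mathbf{x}$, $L=x_r-x_l$, outputs $l_1=x_t$ and $$l_2=\begin{cases} x_t+\max\left\{\frac{(1-a)k}{a}(x_t-x_l),\; x_r-x_t\right\} & \text{if } x_t\in[x_l,\,x_l+aL),\\[2pt] x_t-\max\left\{x_t-x_l,\; \frac{ak}{1-a}(x_r-x_t)\right\} & \text{if } x_t\in[x_l+aL,\,x_r].\end{cases}$$ Then $f$ is strategy-proof.
   Context: Two-facility game on a line: agent $i\in\{1,\dots,n\}$ has location $x_i\in\mathbb{R}$. A mechanism outputs two facility locations $\{l_1,l_2\}$; an agent at $y$ has cost $\min\{|l_1-y|,|l_2-y|\}$. A mechanism $f$ is strategy-proof if for every agent $i$, every profile $\mathbf{x}=\langle x_i,\mathbf{x}_{-i}\rangle$ and every $x_i'\in\mathbb{R}$, the cost of agent $i$ (at true location $x_i$) under $f(x_i,\mathbf{x}_{-i})$ is at most her cost under $f(x_i',\mathbf{x}_{-i})$. *)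

theory Defs
  imports Complex_Main
begin

text \<open>Profiles of n agents are functions nat => real; agent i (for i < n) sits at x i.
 Agents are indexed 0..n-1. A two-facility mechanism maps a profile to a pair of locations.\<close>

definition cost :: "real \<times> real \<Rightarrow> real \<Rightarrow> real" where
  "cost L y = min \<bar>fst L - y\<bar> \<bar>snd L - y\<bar>"

definition strategy_proof :: "nat \<Rightarrow> ((nat \<Rightarrow> real) \<Rightarrow> real \<times> real) \<Rightarrow> bool" where
  "strategy_proof n f \<longleftrightarrow>
     (\<forall>i<n. \<forall>x::nat \<Rightarrow> real. \<forall>x'::real.
        cost (f x) (x i) \<le> cost (f (x(i := x'))) (x i))"

definition xmin :: "nat \<Rightarrow> (nat \<Rightarrow> real) \<Rightarrow> real" where
  "xmin n x = Min (x ` {0..<n})"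

definition xmax :: "nat \<Rightarrow> (nat \<Rightarrow> real) \<Rightarrow> real" where
  "xmax n x = Max (x ` {0..<n})"

definition dict_mech :: "nat \<Rightarrow> nat \<Rightarrow> real \<Rightarrow> real \<Rightarrow> (nat \<Rightarrow> real) \<Rightarrow> real \<times> real" where
  "dict_mech n t k a x =
     (let xl = xmin n x; xr = xmax n x; L = xr - xl; xt = x t in
      (xt,
       if xl \<le> xt \<and> xt < xl + a * L
       then xt + max ((1 - a) * k / a * (xt - xl)) (xr - xt)
       else xt - max (xt - xl) (a * k / (1 - a) * (xr - xt))))"

end

theory Submission
  imports Defs
begin

text \<open>Only the second facility can move, and a report of agent y only enters through the extremes
 lo \<le> (minimum of the others) and hi \<ge> (maximum of the others). Take y right of the dictator c.
 If truthfully the second facility lies right of c, it sits at max (c + A (c - lo), hi) \<ge> y;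
 unless it sits at y, any report either keeps it right of c, where it can only move further
 right, or sends it left of c, which is no better than c itself. If truthfully it lies at or left
 of c, then c is far from lo: k \<ge> 2 yields A (c - lo) \<ge> 2 (y - c), so any rightward placement
 lies beyond the mirror image of c in y. Agents left of c are the mirror image.\<close>

definition second_facility :: "real \<Rightarrow> real \<Rightarrow> real \<Rightarrow> real \<Rightarrow> real \<Rightarrow> real" where
  "second_facility k a c lo hi =
     (if lo \<le> c \<and> c < lo + a * (hi - lo)
      then c + max ((1 - a) * k / a * (c - lo)) (hi - c)
      else c - max (c - lo) (a * k / (1 - a) * (hi - c)))"

lemma dict_mech_eq:
  "dict_mech n t k a x = (x t, second_facility k a (x t) (xmin n x) (xmax n x))"
  unfolding dict_mech_def second_facility_def Let_def by simp

lemma cost_uminus: "cost (- p, - q) (- y) = cost (p, q) y"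
  unfolding cost_def by simp

lemma double_le_scaled_ratio:
  fixes a b k s p :: real
  assumes "0 < a" "2 \<le> k" "0 \<le> s" "a * s \<le> b * p"
  shows "2 * s \<le> b * k / a * p"
proof -
  have "2 * s \<le> k * s" using assms by (simp add: mult_right_mono)
  also have "\<dots> = k * (a * s) / a" using assms by simp
  also have "\<dots> \<le> k * (b * p) / a" using assms by (intro divide_right_mono mult_left_mono) auto
  also have "\<dots> = b * k / a * p" by simp
  finally show ?thesis .
qed

lemma right_agent_no_gain:
  fixes g :: "real \<Rightarrow> real \<Rightarrow> real" and A c y m M z :: real
  assumes "m \<le> c" "c \<le> M" "c < y" "0 \<le> A"
    and above: "\<And>lo hi. lo \<le> c \<Longrightarrow> c \<le> hi \<Longrightarrow> c < g lo hi \<Longrightarrow> g lo hi = max (c + A * (c - lo)) hi"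
    and below: "\<And>lo hi. lo \<le> c \<Longrightarrow> c \<le> hi \<Longrightarrow> g lo hi \<le> c \<Longrightarrow> 2 * (hi - c) \<le> A * (c - lo)"
  shows "cost (c, g (min m y) (max M y)) y \<le> cost (c, g (min m z) (max M z)) y"
proof -
  define h where "h = max M y"
  define l' where "l' = min m z"
  define h' where "h' = max M z"
  have lo: "min m y = m" using assms(1,3) by simp
  have "c \<le> h" "l' \<le> m" "M \<le> h'" using assms(2) unfolding h_def l'_def h'_def by auto
  have "A * (c - m) \<le> A * (c - l')" using \<open>l' \<le> m\<close> assms(4) by (simp add: mult_left_mono)
  have deviation_left_of_center: "cost (c, g l' h') y \<ge> y - c" if "g l' h' \<le> c"
    using that \<open>c < y\<close> by (simp add: cost_def)
  show ?thesis
  proof (cases "c < g m h")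
    case True
    then have g: "g m h = max (c + A * (c - m)) (max M y)"
      using above[of m h] assms(1) \<open>c \<le> h\<close> h_def by simp
    show ?thesis
    proof (cases "c < g l' h'")
      case True
      then have "g l' h' = max (c + A * (c - l')) h'"
        using above[of l' h'] \<open>l' \<le> m\<close> assms(1,2) \<open>M \<le> h'\<close> by simp
      then have "g l' h' \<ge> max (c + A * (c - m)) M"
        using \<open>A * (c - m) \<le> A * (c - l')\<close> \<open>M \<le> h'\<close> by (auto simp: max_def)
      then show ?thesis
        using g unfolding cost_def lo h_def l'_def h'_def by (auto simp: abs_if max_def)
    next
      case False
      then show ?thesis
        using deviation_left_of_center \<open>c < y\<close> unfolding cost_def lo h_def l'_def h'_def by simp
    qed
  next
    case False
    then have "2 * (y - c) \<le> A * (c - m)"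
      using below[of m h] assms(1) \<open>c \<le> h\<close> unfolding h_def by simp
    show ?thesis
    proof (cases "c < g l' h'")
      case True
      then have "g l' h' \<ge> c + A * (c - l')"
        using above[of l' h'] \<open>l' \<le> m\<close> assms(1,2) \<open>M \<le> h'\<close> by simp
      then have "\<bar>g l' h' - y\<bar> \<ge> y - c"
        using \<open>2 * (y - c) \<le> A * (c - m)\<close> \<open>A * (c - m) \<le> A * (c - l')\<close> by simp
      then show ?thesis
        using \<open>c < y\<close> unfolding cost_def lo h_def l'_def h'_def by simp
    next
      case False
      then show ?thesis
        using deviation_left_of_center \<open>c < y\<close> unfolding cost_def lo h_def l'_def h'_def by simp
    qed
  qed
qed

text \<open>The tie-breaking at the region boundary c = lo + a (hi - lo) is not mirror-symmetric, so the
 placement rule is kept abstract and only the mirrored hypotheses are used.\<close>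

lemma left_agent_no_gain:
  fixes g :: "real \<Rightarrow> real \<Rightarrow> real" and B c y m M z :: real
  assumes "m \<le> c" "c \<le> M" "y < c" "0 \<le> B"
    and below: "\<And>lo hi. lo \<le> c \<Longrightarrow> c \<le> hi \<Longrightarrow> g lo hi < c \<Longrightarrow> g lo hi = min (c - B * (hi - c)) lo"
    and above: "\<And>lo hi. lo \<le> c \<Longrightarrow> c \<le> hi \<Longrightarrow> c \<le> g lo hi \<Longrightarrow> 2 * (c - lo) \<le> B * (hi - c)"
  shows "cost (c, g (min m y) (max M y)) y \<le> cost (c, g (min m z) (max M z)) y"
proof -
  define g' where "g' lo hi = - g (- hi) (- lo)" for lo hi
  have "cost (- c, g' (min (- M) (- y)) (max (- m) (- y))) (- y)
      \<le> cost (- c, g' (min (- M) (- z)) (max (- m) (- z))) (- y)"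
  proof (rule right_agent_no_gain[where A = B])
    show "g' lo hi = max (- c + B * (- c - lo)) hi"
      if "lo \<le> - c" "- c \<le> hi" "- c < g' lo hi" for lo hi
      using that below[of "- hi" "- lo"] unfolding g'_def by (simp add: minus_min_eq_max algebra_simps)
    show "2 * (hi - - c) \<le> B * (- c - lo)"
      if "lo \<le> - c" "- c \<le> hi" "g' lo hi \<le> - c" for lo hi
      using that above[of "- hi" "- lo"] unfolding g'_def by (simp add: algebra_simps)
  qed (use assms in auto)
  then show ?thesis
    using cost_uminus unfolding g'_def by (simp add: minus_min_eq_max minus_max_eq_min)
qed

lemma second_facility_gt_center_eq:
  assumes "lo \<le> c" "c < second_facility k a c lo hi"
  shows "second_facility k a c lo hi = max (c + (1 - a) * k / a * (c - lo)) hi"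
  using assms unfolding second_facility_def by (auto split: if_splits simp: max_def)

lemma second_facility_lt_center_eq:
  assumes "c \<le> hi" "second_facility k a c lo hi < c"
  shows "second_facility k a c lo hi = min (c - a * k / (1 - a) * (hi - c)) lo"
  using assms unfolding second_facility_def by (auto split: if_splits simp: max_def min_def)

lemma second_facility_le_center_bound:
  assumes "0 < a" "a < 1" "2 \<le> k" "lo \<le> c" "c \<le> hi" "second_facility k a c lo hi \<le> c"
  shows "2 * (hi - c) \<le> (1 - a) * k / a * (c - lo)"
proof -
  have "\<not> c < lo + a * (hi - lo)"
  proof
    assume left: "c < lo + a * (hi - lo)"
    have "a * (hi - lo) \<le> hi - lo"
      using assms(1,2,4,5) by (intro mult_left_le_one_le) auto
    then have "c < hi" using left by simp
    then have "c < second_facility k a c lo hi"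
      using left assms(4) unfolding second_facility_def by simp
    then show False using assms(6) by simp
  qed
  then have "a * (hi - c) \<le> (1 - a) * (c - lo)" by (simp add: algebra_simps)
  then show ?thesis using assms by (intro double_le_scaled_ratio) auto
qed

lemma second_facility_ge_center_bound:
  assumes "0 < a" "a < 1" "2 \<le> k" "lo \<le> c" "c \<le> hi" "c \<le> second_facility k a c lo hi"
  shows "2 * (c - lo) \<le> a * k / (1 - a) * (hi - c)"
proof (cases "c < lo + a * (hi - lo)")
  case True
  then have "(1 - a) * (c - lo) \<le> a * (hi - c)" by (simp add: algebra_simps)
  then show ?thesis using assms by (intro double_le_scaled_ratio) auto
next
  case False
  then have "c = lo"
    using assms(4,6) unfolding second_facility_def by (auto simp: max_def split: if_splits)
  then show ?thesis using assms by simp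
qed

lemma second_facility_no_gain:
  fixes k a c m M y z :: real
  assumes "0 < a" "a < 1" "2 \<le> k" "m \<le> c" "c \<le> M"
  shows "cost (c, second_facility k a c (min m y) (max M y)) y
       \<le> cost (c, second_facility k a c (min m z) (max M z)) y"
proof -
  have "0 \<le> (1 - a) * k / a" "0 \<le> a * k / (1 - a)" using assms(1-3) by auto
  consider "c < y" | "y = c" | "y < c" by linarith
  then show ?thesis
  proof cases
    case 1
    show ?thesis
      by (rule right_agent_no_gain[where A = "(1 - a) * k / a"])
        (use assms 1 \<open>0 \<le> (1 - a) * k / a\<close> second_facility_gt_center_eq second_facility_le_center_bound in auto)
  next
    case 2
    then show ?thesis by (simp add: cost_def)
  next
    case 3
    show ?thesis
      by (rule left_agent_no_gain[where B = "a * k / (1 - a)"])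
        (use assms 3 \<open>0 \<le> a * k / (1 - a)\<close> second_facility_lt_center_eq second_facility_ge_center_bound in auto)
  qed
qed

lemma others_nonempty:
  fixes i n :: nat
  assumes "i < n" "2 \<le> n"
  shows "{0..<n} - {i} \<noteq> {}"
proof -
  have "(if i = 0 then 1 else 0) \<in> {0..<n} - {i}" using assms by auto
  then show ?thesis by blast
qed

lemma xmin_fun_upd:
  assumes "i < n" "2 \<le> n"
  shows "xmin n (x(i := z)) = min (Min (x ` ({0..<n} - {i}))) z"
  using assms others_nonempty[OF assms]
  unfolding xmin_def fun_upd_image by (simp add: Min_insert min.commute)

lemma xmax_fun_upd:
  assumes "i < n" "2 \<le> n"
  shows "xmax n (x(i := z)) = max (Max (x ` ({0..<n} - {i}))) z"
  using assms others_nonempty[OF assms]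
  unfolding xmax_def fun_upd_image by (simp add: Max_insert max.commute)

theorem theorem3:
  fixes n t :: nat and k a :: real
  assumes "n \<ge> 2" and "t < n" and "k \<ge> 2" and "0 < a" and "a < 1"
  shows "strategy_proof n (dict_mech n t k a)"
  unfolding strategy_proof_def
proof (intro allI impI)
  fix i x z
  assume "i < n"
  show "cost (dict_mech n t k a x) (x i) \<le> cost (dict_mech n t k a (x(i := z))) (x i)"
  proof (cases "i = t")
    case True
    then show ?thesis by (simp add: dict_mech_eq cost_def)
  next
    case False
    define others where "others = x ` ({0..<n} - {i})"
    have "Min others \<le> x t" "x t \<le> Max others"
      using False \<open>t < n\<close> unfolding others_def by auto
    moreover have "dict_mech n t k a (x(i := w)) =
        (x t, second_facility k a (x t) (min (Min others) w) (max (Max others) w))" for w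
      using False \<open>i < n\<close> \<open>n \<ge> 2\<close> unfolding dict_mech_eq others_def
      by (simp add: xmin_fun_upd xmax_fun_upd)
    ultimately show ?thesis
      using second_facility_no_gain[OF assms(4,5,3)] fun_upd_triv[of x i] by metis
  qed
qed

end
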